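(* Let $c_1>0>c_2$, $\alpha\in[0,1)$, $t_0\in\mathbb R$, let $d_1,d_2$ be as in the context, $\tilde L=d_1-d_2$, and for $t>t_0$ let $$\tilde p_1(t)=\frac{d_2-d_1e^{-\tilde L(t-t_0)}}{1-e^{-\tilde L(t-t_0)}},\quad \tilde p_2(t)=\frac{d_1-d_2e^{-\tilde L(t-t_0)}}{1-e^{-\tilde L(t-t_0)}},$$ $$\tilde q_1(t)=\ln\tilde L+d_2(t-t_0)-\ln\big(d_1e^{-\tilde L(t-t_0)}-d_2\big),\quad \tilde q_2(t)=-\ln\tilde L+d_1(t-t_0)+\ln\big(d_1-d_2e^{-\tilde L(t-t_0)}\big),$$ and $u(t,x)=\tilde p_1(t)e^{-|x-\tilde q_1(t)|}+\tilde p_2(t)e^{-|x-\tilde q_2(t)|}$. Then $\tilde q_1(t)\le\tilde q_2(t)$ for $t>t_0$, $u(t,x)\to(c_1+c_2)e^{-|x|}$ as $t\downarrow t_0$, and for every $t>t_0$ $$\int_{\mathbb R}\big(u(t,x)^2+u_x(t,x)^2\big)dx=2d_1^2+2d_2^2=2c_1^2+2c_2^2+4\alpha c_1c_2 .$$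
   Context: Here $d_1=\tfrac12(c_1+c_2)+\sqrt{\tfrac14(c_1+c_2)^2-(1-\alpha)c_1c_2}$ and $d_2=\tfrac12(c_1+c_2)-\sqrt{\tfrac14(c_1+c_2)^2-(1-\alpha)c_1c_2}$. *)

theory Defs
  imports "HOL-Analysis.Analysis"
begin

definition dd1 :: "real \<Rightarrow> real \<Rightarrow> real \<Rightarrow> real" where
  "dd1 c1 c2 \<alpha> = (c1 + c2) / 2 + sqrt ((c1 + c2)^2 / 4 - (1 - \<alpha>) * c1 * c2)"

definition dd2 :: "real \<Rightarrow> real \<Rightarrow> real \<Rightarrow> real" where
  "dd2 c1 c2 \<alpha> = (c1 + c2) / 2 - sqrt ((c1 + c2)^2 / 4 - (1 - \<alpha>) * c1 * c2)"

definition LL :: "real \<Rightarrow> real \<Rightarrow> real \<Rightarrow> real" where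
  "LL c1 c2 \<alpha> = dd1 c1 c2 \<alpha> - dd2 c1 c2 \<alpha>"

definition pp1 :: "real \<Rightarrow> real \<Rightarrow> real \<Rightarrow> real \<Rightarrow> real \<Rightarrow> real" where
  "pp1 c1 c2 \<alpha> t0 t =
     (let d1 = dd1 c1 c2 \<alpha>; d2 = dd2 c1 c2 \<alpha>; L = LL c1 c2 \<alpha>; E = exp (- L * (t - t0))
      in (d2 - d1 * E) / (1 - E))"

definition pp2 :: "real \<Rightarrow> real \<Rightarrow> real \<Rightarrow> real \<Rightarrow> real \<Rightarrow> real" where
  "pp2 c1 c2 \<alpha> t0 t =
     (let d1 = dd1 c1 c2 \<alpha>; d2 = dd2 c1 c2 \<alpha>; L = LL c1 c2 \<alpha>; E = exp (- L * (t - t0))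
      in (d1 - d2 * E) / (1 - E))"

definition qq1 :: "real \<Rightarrow> real \<Rightarrow> real \<Rightarrow> real \<Rightarrow> real \<Rightarrow> real" where
  "qq1 c1 c2 \<alpha> t0 t =
     (let d1 = dd1 c1 c2 \<alpha>; d2 = dd2 c1 c2 \<alpha>; L = LL c1 c2 \<alpha>; E = exp (- L * (t - t0))
      in ln L + d2 * (t - t0) - ln (d1 * E - d2))"

definition qq2 :: "real \<Rightarrow> real \<Rightarrow> real \<Rightarrow> real \<Rightarrow> real \<Rightarrow> real" where
  "qq2 c1 c2 \<alpha> t0 t =
     (let d1 = dd1 c1 c2 \<alpha>; d2 = dd2 c1 c2 \<alpha>; L = LL c1 c2 \<alpha>; E = exp (- L * (t - t0))
      in - ln L + d1 * (t - t0) + ln (d1 - d2 * E))"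

definition uu :: "real \<Rightarrow> real \<Rightarrow> real \<Rightarrow> real \<Rightarrow> real \<Rightarrow> real \<Rightarrow> real" where
  "uu c1 c2 \<alpha> t0 t x =
     pp1 c1 c2 \<alpha> t0 t * exp (- \<bar>x - qq1 c1 c2 \<alpha> t0 t\<bar>)
   + pp2 c1 c2 \<alpha> t0 t * exp (- \<bar>x - qq2 c1 c2 \<alpha> t0 t\<bar>)"

end

theory Submission
  imports Defs
begin

text \<open>
  Put \<open>E = exp (-(d1 - d2)(t - t0))\<close>. The peak separation satisfies
  \<open>exp (q2 - q1) = 1 + \<rho>\<close> with \<open>\<rho> = -d1 d2 (1 - E)\<^sup>2 / ((d1 - d2)\<^sup>2 E) \<ge> 0\<close>, so the peaks are
  ordered and their distance is \<open>O((t - t0)\<^sup>2)\<close>, while \<open>|p1|\<close> only grows like \<open>1 / |t - t0|\<close>.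
  Since \<open>p1 + p2 = d1 + d2 = c1 + c2\<close>, writing \<open>u = (p1 + p2) e^{-|x - q2|} + p1 (e^{-|x - q1|} - e^{-|x - q2|})\<close>
  gives the limit at the collision time.
  The \<open>H\<^sup>1\<close> energy of any two-peakon profile with \<open>q1 \<le> q2\<close> is
  \<open>2 p1\<^sup>2 + 2 p2\<^sup>2 + 4 p1 p2 e^{q1 - q2}\<close>: between consecutive peaks the profile is a combination
  \<open>C e^{-x} + D e^x\<close>, whose energy density \<open>2 C\<^sup>2 e^{-2x} + 2 D\<^sup>2 e^{2x}\<close> has an explicit primitive.
  Along the trajectory this equals \<open>2 d1\<^sup>2 + 2 d2\<^sup>2\<close>, and Vieta's relations for \<open>d1, d2\<close> turn it
  into \<open>2 c1\<^sup>2 + 2 c2\<^sup>2 + 4 \<alpha> c1 c2\<close>.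
\<close>

lemma has_integral_exp_to_minus_infinity:
  fixes a c :: real
  assumes c: "c > 0"
  shows "((\<lambda>x. exp (c * x)) has_integral exp (c * a) / c) {..a}"
proof -
  have h: "((\<lambda>x. exp (-c * x)) has_integral exp (c * a) / c) {-a..}"
    using has_integral_exp_minus_to_infinity[OF c, of "-a"] by simp
  have "(\<lambda>x. exp (-c * x)) absolutely_integrable_on {-a..}"
    using h by (intro nonnegative_absolutely_integrable_1 has_integral_integrable) auto
  moreover have "(\<lambda>x. exp (c * (-x))) = (\<lambda>x. exp (-c * x))" by simp
  ultimately have "(\<lambda>x. exp (c * x)) absolutely_integrable_on {..a}
      \<and> integral {..a} (\<lambda>x. exp (c * x)) = exp (c * a) / c"
    using has_absolute_integral_reflect_real[of "{-a..}" "{..a}" "\<lambda>x. exp (c * x)" "exp (c * a) / c"]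
      integral_unique[OF h] by auto
  then show ?thesis
    by (metis has_integral_integral set_lebesgue_integral_eq_integral(1))
qed

lemma has_integral_atMost_atLeastAtMost_atLeast:
  fixes f :: "real \<Rightarrow> 'b::banach"
  assumes "a \<le> b" and "(f has_integral I) {..a}" and "(f has_integral J) {a..b}"
    and "(f has_integral K) {b..}"
  shows "(f has_integral I + J + K) UNIV"
proof -
  have "(f has_integral I + J) ({..a} \<union> {a..b})"
    using assms by (intro has_integral_Un) (auto intro: negligible_subset[of "{a}"])
  moreover have "{..a} \<union> {a..b} = {..b}" using \<open>a \<le> b\<close> by auto
  ultimately have "(f has_integral I + J + K) ({..b} \<union> {b..})"
    using assms by (intro has_integral_Un) (auto intro: negligible_subset[of "{b}"])
  moreover have "{..b} \<union> {b..} = UNIV" by auto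
  ultimately show ?thesis by simp
qed

lemma has_integral_exp_pair_energy:
  fixes a b C D :: real
  assumes "a \<le> b"
  shows "((\<lambda>x. 2 * C\<^sup>2 * exp (-2 * x) + 2 * D\<^sup>2 * exp (2 * x)) has_integral
           (D\<^sup>2 * exp (2 * b) - C\<^sup>2 * exp (-2 * b)) - (D\<^sup>2 * exp (2 * a) - C\<^sup>2 * exp (-2 * a))) {a..b}"
proof (rule fundamental_theorem_of_calculus[OF assms])
  fix x :: real
  have "((\<lambda>x. D\<^sup>2 * exp (2 * x) - C\<^sup>2 * exp (-2 * x)) has_real_derivative
          2 * C\<^sup>2 * exp (-2 * x) + 2 * D\<^sup>2 * exp (2 * x)) (at x)"
    by (auto intro!: derivative_eq_intros)
  then show "((\<lambda>x. D\<^sup>2 * exp (2 * x) - C\<^sup>2 * exp (-2 * x)) has_vector_derivative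
          2 * C\<^sup>2 * exp (-2 * x) + 2 * D\<^sup>2 * exp (2 * x)) (at x within {a..b})"
    by (simp add: has_real_derivative_iff_has_vector_derivative[symmetric] has_field_derivative_at_within)
qed

lemma has_real_derivative_exp_neg_abs:
  fixes x q :: real
  assumes "x \<noteq> q"
  shows "((\<lambda>y. exp (- \<bar>y - q\<bar>)) has_real_derivative - sgn (x - q) * exp (- \<bar>x - q\<bar>)) (at x)"
proof (cases "q < x")
  case True
  have "((\<lambda>y. exp (q - y)) has_real_derivative - sgn (x - q) * exp (- \<bar>x - q\<bar>)) (at x)"
    using True by (auto intro!: derivative_eq_intros)
  then show ?thesis
    by (rule has_field_derivative_transform_within_open[where S = "{q<..}"]) (use True in auto)
next
  case False
  with assms have "x < q" by simp
  have "((\<lambda>y. exp (y - q)) has_real_derivative - sgn (x - q) * exp (- \<bar>x - q\<bar>)) (at x)"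
    using \<open>x < q\<close> by (auto intro!: derivative_eq_intros)
  then show ?thesis
    by (rule has_field_derivative_transform_within_open[where S = "{..<q}"]) (use \<open>x < q\<close> in auto)
qed

lemma exp_neg_abs_eq:
  fixes x q :: real
  shows "exp (- \<bar>x - q\<bar>) = (if q < x then exp q * exp (- x) else exp (- q) * exp x)"
  by (simp add: abs_if mult_exp_exp)

lemma sgn_mult_exp_neg_abs_eq:
  fixes x q :: real
  assumes "x \<noteq> q"
  shows "sgn (x - q) * exp (- \<bar>x - q\<bar>) = (if q < x then exp q * exp (- x) else - (exp (- q) * exp x))"
  using assms by (simp add: abs_if mult_exp_exp)

lemma exp_neg_abs_lipschitz:
  fixes y z :: real
  shows "\<bar>exp (- \<bar>y\<bar>) - exp (- \<bar>z\<bar>)\<bar> \<le> \<bar>y - z\<bar>"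
proof -
  have ordered: "exp (- b) - exp (- a) \<le> a - b" if "0 \<le> b" "b \<le> a" for a b :: real
  proof -
    have "exp (- b) - exp (- a) = exp (- b) * (1 - exp (b - a))"
      by (simp add: algebra_simps flip: exp_add)
    also have "\<dots> \<le> 1 * (a - b)"
    proof (rule mult_mono)
      show "1 - exp (b - a) \<le> a - b" using exp_ge_add_one_self[of "b - a"] by linarith
    qed (use that in auto)
    finally show ?thesis by simp
  qed
  have "\<bar>exp (- \<bar>y\<bar>) - exp (- \<bar>z\<bar>)\<bar> \<le> \<bar>\<bar>y\<bar> - \<bar>z\<bar>\<bar>"
    using ordered[of "\<bar>y\<bar>" "\<bar>z\<bar>"] ordered[of "\<bar>z\<bar>" "\<bar>y\<bar>"] by (cases "\<bar>y\<bar> \<le> \<bar>z\<bar>") auto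
  also have "\<dots> \<le> \<bar>y - z\<bar>" by (rule abs_triangle_ineq3)
  finally show ?thesis .
qed

definition two_peakon :: "real \<Rightarrow> real \<Rightarrow> real \<Rightarrow> real \<Rightarrow> real \<Rightarrow> real" where
  "two_peakon p1 q1 p2 q2 x = p1 * exp (- \<bar>x - q1\<bar>) + p2 * exp (- \<bar>x - q2\<bar>)"

lemma deriv_two_peakon:
  assumes "x \<noteq> q1" and "x \<noteq> q2"
  shows "deriv (two_peakon p1 q1 p2 q2) x
           = - (p1 * sgn (x - q1) * exp (- \<bar>x - q1\<bar>) + p2 * sgn (x - q2) * exp (- \<bar>x - q2\<bar>))"
proof -
  have "(two_peakon p1 q1 p2 q2 has_real_derivative
          p1 * (- sgn (x - q1) * exp (- \<bar>x - q1\<bar>)) + p2 * (- sgn (x - q2) * exp (- \<bar>x - q2\<bar>))) (at x)"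
    unfolding two_peakon_def[abs_def]
    using assms by (intro DERIV_add DERIV_cmult has_real_derivative_exp_neg_abs) auto
  then show ?thesis by (simp add: DERIV_imp_deriv algebra_simps)
qed

lemma two_peakon_energy_density:
  fixes p1 q1 p2 q2 x :: real
  assumes "x \<noteq> q1" and "x \<noteq> q2"
  defines "C \<equiv> (if q1 < x then p1 * exp q1 else 0) + (if q2 < x then p2 * exp q2 else 0)"
    and "D \<equiv> (if q1 < x then 0 else p1 * exp (- q1)) + (if q2 < x then 0 else p2 * exp (- q2))"
  shows "(two_peakon p1 q1 p2 q2 x)\<^sup>2 + (deriv (two_peakon p1 q1 p2 q2) x)\<^sup>2
           = 2 * C\<^sup>2 * exp (-2 * x) + 2 * D\<^sup>2 * exp (2 * x)"
proof -
  have f_eq: "two_peakon p1 q1 p2 q2 x = C * exp (- x) + D * exp x"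
    unfolding two_peakon_def exp_neg_abs_eq C_def D_def by (simp add: algebra_simps)
  have df_eq: "deriv (two_peakon p1 q1 p2 q2) x = - C * exp (- x) + D * exp x"
    unfolding deriv_two_peakon[OF assms(1,2)] mult.assoc sgn_mult_exp_neg_abs_eq[OF assms(1)]
      sgn_mult_exp_neg_abs_eq[OF assms(2)] C_def D_def by (simp add: algebra_simps)
  have "exp (-2 * x) = (exp (- x))\<^sup>2" "exp (2 * x) = (exp x)\<^sup>2"
    by (simp_all add: power2_eq_square flip: exp_add)
  then show ?thesis unfolding f_eq df_eq by (simp add: power2_eq_square algebra_simps)
qed

lemma two_peakon_energy:
  fixes p1 q1 p2 q2 :: real
  assumes "q1 \<le> q2"
  shows "((\<lambda>x. (two_peakon p1 q1 p2 q2 x)\<^sup>2 + (deriv (two_peakon p1 q1 p2 q2) x)\<^sup>2)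
           has_integral 2 * p1\<^sup>2 + 2 * p2\<^sup>2 + 4 * p1 * p2 * exp (q1 - q2)) UNIV"
proof -
  let ?e = "\<lambda>x. (two_peakon p1 q1 p2 q2 x)\<^sup>2 + (deriv (two_peakon p1 q1 p2 q2) x)\<^sup>2"
  define D\<^sub>l where "D\<^sub>l = p1 * exp (- q1) + p2 * exp (- q2)"
  define C\<^sub>m where "C\<^sub>m = p1 * exp q1"
  define D\<^sub>m where "D\<^sub>m = p2 * exp (- q2)"
  define C\<^sub>r where "C\<^sub>r = p1 * exp q1 + p2 * exp q2"
  have left: "(?e has_integral D\<^sub>l\<^sup>2 * exp (2 * q1)) {..q1}"
  proof (rule has_integral_spike_finite[of "{q1}"])
    show "((\<lambda>x. 2 * D\<^sub>l\<^sup>2 * exp (2 * x)) has_integral D\<^sub>l\<^sup>2 * exp (2 * q1)) {..q1}"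
      using has_integral_mult_right[OF has_integral_exp_to_minus_infinity[of 2 q1], of "2 * D\<^sub>l\<^sup>2"]
      by simp
  qed (use assms in \<open>auto simp: two_peakon_energy_density D\<^sub>l_def\<close>)
  have middle: "(?e has_integral (D\<^sub>m\<^sup>2 * exp (2 * q2) - C\<^sub>m\<^sup>2 * exp (-2 * q2))
                               - (D\<^sub>m\<^sup>2 * exp (2 * q1) - C\<^sub>m\<^sup>2 * exp (-2 * q1))) {q1..q2}"
    by (rule has_integral_spike_finite[of "{q1, q2}", OF _ _ has_integral_exp_pair_energy[OF assms]])
      (auto simp: two_peakon_energy_density C\<^sub>m_def D\<^sub>m_def)
  have right: "(?e has_integral C\<^sub>r\<^sup>2 * exp (-2 * q2)) {q2..}"
  proof (rule has_integral_spike_finite[of "{q2}"])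
    show "((\<lambda>x. 2 * C\<^sub>r\<^sup>2 * exp (-2 * x)) has_integral C\<^sub>r\<^sup>2 * exp (-2 * q2)) {q2..}"
      using has_integral_mult_right[OF has_integral_exp_minus_to_infinity[of 2 q2], of "2 * C\<^sub>r\<^sup>2"]
      by simp
  qed (use assms in \<open>auto simp: two_peakon_energy_density C\<^sub>r_def\<close>)
  have "D\<^sub>l\<^sup>2 * exp (2 * q1) + ((D\<^sub>m\<^sup>2 * exp (2 * q2) - C\<^sub>m\<^sup>2 * exp (-2 * q2))
          - (D\<^sub>m\<^sup>2 * exp (2 * q1) - C\<^sub>m\<^sup>2 * exp (-2 * q1))) + C\<^sub>r\<^sup>2 * exp (-2 * q2)
        = 2 * p1\<^sup>2 + 2 * p2\<^sup>2 + 4 * p1 * p2 * exp (q1 - q2)"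
    by (simp add: D\<^sub>l_def C\<^sub>m_def D\<^sub>m_def C\<^sub>r_def power2_eq_square algebra_simps flip: exp_add)
  with has_integral_atMost_atLeastAtMost_atLeast[OF assms left middle right] show ?thesis
    by simp
qed

lemma dd1_plus_dd2: "dd1 c1 c2 \<alpha> + dd2 c1 c2 \<alpha> = c1 + c2"
  by (simp add: dd1_def dd2_def)

lemma dd1_times_dd2:
  assumes "(1 - \<alpha>) * c1 * c2 \<le> (c1 + c2)\<^sup>2 / 4"
  shows "dd1 c1 c2 \<alpha> * dd2 c1 c2 \<alpha> = (1 - \<alpha>) * c1 * c2"
proof -
  have "dd1 c1 c2 \<alpha> * dd2 c1 c2 \<alpha> = ((c1 + c2) / 2)\<^sup>2 - (sqrt ((c1 + c2)\<^sup>2 / 4 - (1 - \<alpha>) * c1 * c2))\<^sup>2"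
    by (simp add: dd1_def dd2_def power2_eq_square algebra_simps)
  with assms show ?thesis by (simp add: power_divide)
qed

lemma dd2_neg_dd1_pos:
  assumes "(1 - \<alpha>) * c1 * c2 < 0"
  shows "dd2 c1 c2 \<alpha> < 0" and "0 < dd1 c1 c2 \<alpha>"
proof -
  have "\<bar>c1 + c2\<bar> / 2 = sqrt ((c1 + c2)\<^sup>2 / 4)"
    by (simp add: real_sqrt_divide)
  also have "\<dots> < sqrt ((c1 + c2)\<^sup>2 / 4 - (1 - \<alpha>) * c1 * c2)"
    using assms by (intro real_sqrt_less_mono) linarith
  finally have "\<bar>c1 + c2\<bar> / 2 < sqrt ((c1 + c2)\<^sup>2 / 4 - (1 - \<alpha>) * c1 * c2)" .
  then show "dd2 c1 c2 \<alpha> < 0" "0 < dd1 c1 c2 \<alpha>"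
    unfolding dd1_def dd2_def by (simp_all add: field_simps abs_less_iff)
qed

lemma dd_energy_identity:
  assumes "(1 - \<alpha>) * c1 * c2 \<le> (c1 + c2)\<^sup>2 / 4"
  shows "2 * (dd1 c1 c2 \<alpha>)\<^sup>2 + 2 * (dd2 c1 c2 \<alpha>)\<^sup>2 = 2 * c1\<^sup>2 + 2 * c2\<^sup>2 + 4 * \<alpha> * c1 * c2"
proof -
  have "2 * (dd1 c1 c2 \<alpha>)\<^sup>2 + 2 * (dd2 c1 c2 \<alpha>)\<^sup>2
        = 2 * (dd1 c1 c2 \<alpha> + dd2 c1 c2 \<alpha>)\<^sup>2 - 4 * (dd1 c1 c2 \<alpha> * dd2 c1 c2 \<alpha>)"
    by (simp add: power2_eq_square algebra_simps)
  then show ?thesis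
    by (simp add: dd1_plus_dd2 dd1_times_dd2[OF assms] power2_eq_square algebra_simps)
qed

lemma uu_eq_two_peakon:
  "uu c1 c2 \<alpha> t0 t = two_peakon (pp1 c1 c2 \<alpha> t0 t) (qq1 c1 c2 \<alpha> t0 t) (pp2 c1 c2 \<alpha> t0 t) (qq2 c1 c2 \<alpha> t0 t)"
  by (simp add: fun_eq_iff uu_def two_peakon_def)

locale peakon_pair =
  fixes c1 c2 \<alpha> t0 :: real
  assumes dd2_neg: "dd2 c1 c2 \<alpha> < 0" and dd1_pos: "0 < dd1 c1 c2 \<alpha>"
begin

abbreviation d1 :: real where "d1 \<equiv> dd1 c1 c2 \<alpha>"
abbreviation d2 :: real where "d2 \<equiv> dd2 c1 c2 \<alpha>"

definition E :: "real \<Rightarrow> real" where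
  "E t = exp (- (d1 - d2) * (t - t0))"

lemma pp1_eq: "pp1 c1 c2 \<alpha> t0 t = (d2 - d1 * E t) / (1 - E t)"
  and pp2_eq: "pp2 c1 c2 \<alpha> t0 t = (d1 - d2 * E t) / (1 - E t)"
  and qq1_eq: "qq1 c1 c2 \<alpha> t0 t = ln (d1 - d2) + d2 * (t - t0) - ln (d1 * E t - d2)"
  and qq2_eq: "qq2 c1 c2 \<alpha> t0 t = - ln (d1 - d2) + d1 * (t - t0) + ln (d1 - d2 * E t)"
  unfolding pp1_def pp2_def qq1_def qq2_def LL_def E_def Let_def by (rule refl)+

lemma E_pos: "0 < E t"
  by (simp add: E_def)

lemma E_eq_1_iff: "E t = 1 \<longleftrightarrow> t = t0"
  using dd1_pos dd2_neg by (simp add: E_def)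

lemma ln_args_pos: "0 < d1 * E t - d2" "0 < d1 - d2 * E t"
  using mult_pos_pos[OF dd1_pos E_pos[of t]] mult_neg_pos[OF dd2_neg E_pos[of t]] dd1_pos dd2_neg
  by linarith+

lemma exp_qq1_minus_qq2:
  "exp (qq1 c1 c2 \<alpha> t0 t - qq2 c1 c2 \<alpha> t0 t)
     = (d1 - d2)\<^sup>2 * E t / ((d1 * E t - d2) * (d1 - d2 * E t))"
proof -
  have L: "d1 - d2 > 0" using dd1_pos dd2_neg by simp
  have q1: "exp (qq1 c1 c2 \<alpha> t0 t) = (d1 - d2) * exp (d2 * (t - t0)) / (d1 * E t - d2)"
    using L ln_args_pos(1)[of t] by (simp add: qq1_eq exp_diff exp_add)
  have q2: "exp (qq2 c1 c2 \<alpha> t0 t) = exp (d1 * (t - t0)) * (d1 - d2 * E t) / (d1 - d2)"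
  proof -
    have "qq2 c1 c2 \<alpha> t0 t = d1 * (t - t0) + ln (d1 - d2 * E t) - ln (d1 - d2)"
      by (simp add: qq2_eq)
    then show ?thesis using L ln_args_pos(2)[of t] by (simp add: exp_diff exp_add)
  qed
  have e: "exp (d2 * (t - t0)) = E t * exp (d1 * (t - t0))"
    by (simp add: E_def algebra_simps flip: exp_add)
  show ?thesis
    unfolding exp_diff q1 q2 e using L ln_args_pos[of t] by (simp add: power2_eq_square)
qed

definition rho :: "real \<Rightarrow> real" where
  "rho t = - (d1 * d2) * (1 - E t)\<^sup>2 / ((d1 - d2)\<^sup>2 * E t)"

lemma rho_nonneg: "0 \<le> rho t"
  unfolding rho_def using mult_pos_neg[OF dd1_pos dd2_neg] dd1_pos dd2_neg E_pos[of t]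
  by (intro divide_nonneg_pos mult_nonneg_nonneg) auto

lemma rho_pos:
  assumes "t \<noteq> t0"
  shows "0 < rho t"
  unfolding rho_def using mult_pos_neg[OF dd1_pos dd2_neg] dd1_pos dd2_neg E_pos[of t] assms E_eq_1_iff[of t]
  by (intro divide_pos_pos mult_pos_pos) auto

lemma exp_qq2_minus_qq1: "exp (qq2 c1 c2 \<alpha> t0 t - qq1 c1 c2 \<alpha> t0 t) = 1 + rho t"
proof -
  have L: "(d1 - d2)\<^sup>2 * E t > 0" using dd1_pos dd2_neg E_pos[of t] by simp
  have "exp (qq2 c1 c2 \<alpha> t0 t - qq1 c1 c2 \<alpha> t0 t) = 1 / exp (qq1 c1 c2 \<alpha> t0 t - qq2 c1 c2 \<alpha> t0 t)"
    by (simp add: exp_diff)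
  also have "\<dots> = (d1 * E t - d2) * (d1 - d2 * E t) / ((d1 - d2)\<^sup>2 * E t)"
    by (simp add: exp_qq1_minus_qq2)
  also have "(d1 * E t - d2) * (d1 - d2 * E t) = (d1 - d2)\<^sup>2 * E t + - (d1 * d2) * (1 - E t)\<^sup>2"
    by (simp add: power2_eq_square algebra_simps)
  finally show ?thesis
    using L dd1_pos dd2_neg E_pos[of t] by (simp add: rho_def diff_divide_distrib)
qed

lemma qq1_less_qq2:
  assumes "t \<noteq> t0"
  shows "qq1 c1 c2 \<alpha> t0 t < qq2 c1 c2 \<alpha> t0 t"
proof -
  have "1 < exp (qq2 c1 c2 \<alpha> t0 t - qq1 c1 c2 \<alpha> t0 t)"
    using exp_qq2_minus_qq1[of t] rho_pos[OF assms] by simp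
  then show ?thesis by simp
qed

lemma qq2_minus_qq1_le: "qq2 c1 c2 \<alpha> t0 t - qq1 c1 c2 \<alpha> t0 t \<le> rho t"
  using ln_add_one_self_le_self[OF rho_nonneg] arg_cong[OF exp_qq2_minus_qq1[of t], of ln] by simp

lemma pp1_plus_pp2:
  assumes "t \<noteq> t0"
  shows "pp1 c1 c2 \<alpha> t0 t + pp2 c1 c2 \<alpha> t0 t = d1 + d2"
proof -
  have "1 - E t \<noteq> 0" using assms E_eq_1_iff[of t] by simp
  moreover have "(d2 - d1 * E t) + (d1 - d2 * E t) = (d1 + d2) * (1 - E t)"
    by (simp add: algebra_simps)
  ultimately show ?thesis by (simp add: pp1_eq pp2_eq add_divide_distrib[symmetric])
qed

lemma collision_energy_balance:
  assumes "t \<noteq> t0"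
  shows "2 * (pp1 c1 c2 \<alpha> t0 t)\<^sup>2 + 2 * (pp2 c1 c2 \<alpha> t0 t)\<^sup>2
           + 4 * pp1 c1 c2 \<alpha> t0 t * pp2 c1 c2 \<alpha> t0 t * exp (qq1 c1 c2 \<alpha> t0 t - qq2 c1 c2 \<alpha> t0 t)
         = 2 * d1\<^sup>2 + 2 * d2\<^sup>2"
proof -
  define N1 N2 k where "N1 = d1 * E t - d2" and "N2 = d1 - d2 * E t" and "k = 1 - E t"
  have "N1 > 0" "N2 > 0" using ln_args_pos[of t] by (simp_all add: N1_def N2_def)
  have "k \<noteq> 0" using assms E_eq_1_iff[of t] by (simp add: k_def)
  have p: "pp1 c1 c2 \<alpha> t0 t = - N1 / k" "pp2 c1 c2 \<alpha> t0 t = N2 / k"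
    by (simp_all add: pp1_eq pp2_eq N1_def N2_def k_def minus_divide_left)
  have e: "exp (qq1 c1 c2 \<alpha> t0 t - qq2 c1 c2 \<alpha> t0 t) = (d1 - d2)\<^sup>2 * E t / (N1 * N2)"
    by (simp add: exp_qq1_minus_qq2 N1_def N2_def)
  have "2 * (pp1 c1 c2 \<alpha> t0 t)\<^sup>2 + 2 * (pp2 c1 c2 \<alpha> t0 t)\<^sup>2
           + 4 * pp1 c1 c2 \<alpha> t0 t * pp2 c1 c2 \<alpha> t0 t * exp (qq1 c1 c2 \<alpha> t0 t - qq2 c1 c2 \<alpha> t0 t)
        = (2 * N1\<^sup>2 + 2 * N2\<^sup>2 - 4 * (d1 - d2)\<^sup>2 * E t) / k\<^sup>2"
    unfolding p e using \<open>N1 > 0\<close> \<open>N2 > 0\<close> \<open>k \<noteq> 0\<close>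
    by (simp add: power2_eq_square field_simps)
  also have "2 * N1\<^sup>2 + 2 * N2\<^sup>2 - 4 * (d1 - d2)\<^sup>2 * E t = (2 * d1\<^sup>2 + 2 * d2\<^sup>2) * k\<^sup>2"
    by (simp add: N1_def N2_def k_def power2_eq_square algebra_simps)
  finally show ?thesis using \<open>k \<noteq> 0\<close> by simp
qed

lemma E_tendsto: "(E \<longlongrightarrow> 1) (at t0)"
  unfolding E_def[abs_def] by (auto intro!: tendsto_eq_intros)

lemma qq2_tendsto_zero: "(qq2 c1 c2 \<alpha> t0 \<longlongrightarrow> 0) (at t0)"
proof -
  have "((\<lambda>t. - ln (d1 - d2) + d1 * (t - t0) + ln (d1 - d2 * E t))
          \<longlongrightarrow> - ln (d1 - d2) + d1 * (t0 - t0) + ln (d1 - d2 * 1)) (at t0)"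
    using dd1_pos dd2_neg by (intro tendsto_intros E_tendsto) auto
  then show ?thesis by (simp add: qq2_eq[abs_def])
qed

lemma pp1_gap_tendsto_zero:
  "((\<lambda>t. \<bar>pp1 c1 c2 \<alpha> t0 t\<bar> * (qq2 c1 c2 \<alpha> t0 t - qq1 c1 c2 \<alpha> t0 t)) \<longlongrightarrow> 0) (at t0)"
proof (rule Lim_null_comparison)
  define g where "g t = (d1 * E t - d2) * \<bar>1 - E t\<bar> * - (d1 * d2) / ((d1 - d2)\<^sup>2 * E t)" for t
  show "(g \<longlongrightarrow> 0) (at t0)"
    unfolding g_def[abs_def] using dd1_pos dd2_neg
    by (auto intro!: tendsto_eq_intros E_tendsto)
  show "\<forall>\<^sub>F t in at t0. norm (\<bar>pp1 c1 c2 \<alpha> t0 t\<bar> * (qq2 c1 c2 \<alpha> t0 t - qq1 c1 c2 \<alpha> t0 t)) \<le> g t"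
    unfolding eventually_at_filter
  proof (intro always_eventually allI impI)
    fix t assume "t \<noteq> t0"
    then have k: "\<bar>1 - E t\<bar> > 0" using E_eq_1_iff[of t] by simp
    have "norm (\<bar>pp1 c1 c2 \<alpha> t0 t\<bar> * (qq2 c1 c2 \<alpha> t0 t - qq1 c1 c2 \<alpha> t0 t))
          = \<bar>pp1 c1 c2 \<alpha> t0 t\<bar> * (qq2 c1 c2 \<alpha> t0 t - qq1 c1 c2 \<alpha> t0 t)"
      using qq1_less_qq2[OF \<open>t \<noteq> t0\<close>] by simp
    also have "\<dots> \<le> \<bar>pp1 c1 c2 \<alpha> t0 t\<bar> * rho t"
      by (intro mult_left_mono qq2_minus_qq1_le) simp
    also have "\<dots> = g t"
    proof -
      define a where "a = \<bar>1 - E t\<bar>"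
      have "a > 0" using k by (simp add: a_def)
      have p: "\<bar>pp1 c1 c2 \<alpha> t0 t\<bar> = (d1 * E t - d2) / a"
        using ln_args_pos(1)[of t] by (simp add: pp1_eq a_def abs_minus_commute[of d2])
      have sq: "(1 - E t)\<^sup>2 = a * a"
        by (simp add: a_def power2_eq_square)
      have gt: "g t = (d1 * E t - d2) * a * - (d1 * d2) / ((d1 - d2)\<^sup>2 * E t)"
        by (simp add: g_def a_def)
      show ?thesis
        unfolding rho_def p sq gt using \<open>a > 0\<close> E_pos[of t] dd1_pos dd2_neg
        by (simp add: field_simps)
    qed
    finally show "norm (\<bar>pp1 c1 c2 \<alpha> t0 t\<bar> * (qq2 c1 c2 \<alpha> t0 t - qq1 c1 c2 \<alpha> t0 t)) \<le> g t" .
  qed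
qed

lemma uu_tendsto: "((\<lambda>t. uu c1 c2 \<alpha> t0 t x) \<longlongrightarrow> (d1 + d2) * exp (- \<bar>x\<bar>)) (at t0)"
proof -
  let ?e1 = "\<lambda>t. exp (- \<bar>x - qq1 c1 c2 \<alpha> t0 t\<bar>)" and ?e2 = "\<lambda>t. exp (- \<bar>x - qq2 c1 c2 \<alpha> t0 t\<bar>)"
  have "((\<lambda>t. pp1 c1 c2 \<alpha> t0 t * (?e1 t - ?e2 t)) \<longlongrightarrow> 0) (at t0)"
  proof (rule Lim_null_comparison[OF _ pp1_gap_tendsto_zero])
    show "\<forall>\<^sub>F t in at t0. norm (pp1 c1 c2 \<alpha> t0 t * (?e1 t - ?e2 t))
            \<le> \<bar>pp1 c1 c2 \<alpha> t0 t\<bar> * (qq2 c1 c2 \<alpha> t0 t - qq1 c1 c2 \<alpha> t0 t)"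
      unfolding eventually_at_filter
    proof (intro always_eventually allI impI)
      fix t assume "t \<noteq> t0"
      have "\<bar>?e1 t - ?e2 t\<bar> \<le> qq2 c1 c2 \<alpha> t0 t - qq1 c1 c2 \<alpha> t0 t"
        using exp_neg_abs_lipschitz[of "x - qq1 c1 c2 \<alpha> t0 t" "x - qq2 c1 c2 \<alpha> t0 t"]
          qq1_less_qq2[OF \<open>t \<noteq> t0\<close>] by simp
      then show "norm (pp1 c1 c2 \<alpha> t0 t * (?e1 t - ?e2 t))
            \<le> \<bar>pp1 c1 c2 \<alpha> t0 t\<bar> * (qq2 c1 c2 \<alpha> t0 t - qq1 c1 c2 \<alpha> t0 t)"
        by (simp add: abs_mult mult_left_mono)
    qed
  qed
  then have "((\<lambda>t. (d1 + d2) * ?e2 t + pp1 c1 c2 \<alpha> t0 t * (?e1 t - ?e2 t))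
               \<longlongrightarrow> (d1 + d2) * exp (- \<bar>x - 0\<bar>) + 0) (at t0)"
    by (intro tendsto_intros qq2_tendsto_zero)
  moreover have "\<forall>\<^sub>F t in at t0. (d1 + d2) * ?e2 t + pp1 c1 c2 \<alpha> t0 t * (?e1 t - ?e2 t) = uu c1 c2 \<alpha> t0 t x"
    unfolding eventually_at_filter
    by (intro always_eventually allI impI)
      (simp add: uu_def pp1_plus_pp2[symmetric] algebra_simps)
  ultimately show ?thesis by (simp add: Lim_transform_eventually)
qed

end

theorem mainTheorem8:
  fixes c1 c2 \<alpha> t0 :: real
  assumes "c1 > 0" and "c2 < 0" and "0 \<le> \<alpha>" and "\<alpha> < 1"
  shows "(\<forall>t > t0. qq1 c1 c2 \<alpha> t0 t \<le> qq2 c1 c2 \<alpha> t0 t)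
    \<and> (\<forall>x. ((\<lambda>t. uu c1 c2 \<alpha> t0 t x) \<longlongrightarrow> (c1 + c2) * exp (- \<bar>x\<bar>)) (at_right t0))
    \<and> (\<forall>t > t0. ((\<lambda>x. (uu c1 c2 \<alpha> t0 t x)^2 + (deriv (\<lambda>y. uu c1 c2 \<alpha> t0 t y) x)^2)
                    has_integral (2 * (dd1 c1 c2 \<alpha>)^2 + 2 * (dd2 c1 c2 \<alpha>)^2)) UNIV)
    \<and> 2 * (dd1 c1 c2 \<alpha>)^2 + 2 * (dd2 c1 c2 \<alpha>)^2 = 2 * c1^2 + 2 * c2^2 + 4 * \<alpha> * c1 * c2"
proof -
  have sign: "(1 - \<alpha>) * c1 * c2 < 0"
    using assms by (intro mult_pos_neg) auto
  interpret peakon_pair c1 c2 \<alpha> t0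
    using dd2_neg_dd1_pos[OF sign] by unfold_locales
  have "\<forall>t > t0. qq1 c1 c2 \<alpha> t0 t \<le> qq2 c1 c2 \<alpha> t0 t"
    using qq1_less_qq2 by (auto intro: less_imp_le)
  moreover have "\<forall>x. ((\<lambda>t. uu c1 c2 \<alpha> t0 t x) \<longlongrightarrow> (c1 + c2) * exp (- \<bar>x\<bar>)) (at_right t0)"
    using uu_tendsto by (auto simp: dd1_plus_dd2 intro: tendsto_within_subset)
  moreover have "((\<lambda>x. (uu c1 c2 \<alpha> t0 t x)^2 + (deriv (\<lambda>y. uu c1 c2 \<alpha> t0 t y) x)^2)
                    has_integral (2 * d1^2 + 2 * d2^2)) UNIV" if "t > t0" for t
  proof -
    have "t \<noteq> t0" using that by simp
    show ?thesis
      using two_peakon_energy[OF less_imp_le[OF qq1_less_qq2[OF \<open>t \<noteq> t0\<close>]],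
          of "pp1 c1 c2 \<alpha> t0 t" "pp2 c1 c2 \<alpha> t0 t"]
      by (simp add: uu_eq_two_peakon collision_energy_balance[OF \<open>t \<noteq> t0\<close>])
  qed
  moreover have "2 * d1^2 + 2 * d2^2 = 2 * c1^2 + 2 * c2^2 + 4 * \<alpha> * c1 * c2"
    using sign zero_le_power2[of "c1 + c2"] by (intro dd_energy_identity) linarith
  ultimately show ?thesis by blast
qed

end
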